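(* There is an absolute constant $C$ such that for every general ordinal setting with $n\ge2$ agents there is a randomized mechanism $\mathcal{M}$ that is a $C\log n$-rank-approximation mechanism, i.e. for every profile $\succ$ and every $i\in[m]$, $\mathbb{E}[\mathrm{rank}_i(\mathcal{M}(\succ);\succ)]\ge\mathrm{maxrank}_i(\succ)/(C\log n)$.
   Context: General ordinal setting: $n$ agents and $m$ outcomes; each agent has a strict total order $\succ_j$ on the outcomes. $\mathrm{rank}_i(o;\succ)$ is the number of agents having $o$ among their top $i$ outcomes, $\mathrm{maxrank}_i(\succ)=\max_o\mathrm{rank}_i(o;\succ)$. A randomized mechanism maps each profile to a probability distribution over outcomes; expectation is over its randomness. *)

theory Defs
  imports "HOL-Probability.Probability"
begin

text \<open>A preference of an agent is a list of
all outcomes without repetition, ordered from most to least preferred (a strict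
total order).\<close>

definition is_pref :: "nat \<Rightarrow> nat list \<Rightarrow> bool" where
  "is_pref m l \<longleftrightarrow> distinct l \<and> set l = {..<m}"

definition is_profile :: "nat \<Rightarrow> nat \<Rightarrow> (nat \<Rightarrow> nat list) \<Rightarrow> bool" where
  "is_profile n m P \<longleftrightarrow> (\<forall>j<n. is_pref m (P j))"

definition rank :: "nat \<Rightarrow> (nat \<Rightarrow> nat list) \<Rightarrow> nat \<Rightarrow> nat \<Rightarrow> nat" where
  "rank n P i x = card {j. j < n \<and> x \<in> set (take i (P j))}"

definition maxrank :: "nat \<Rightarrow> nat \<Rightarrow> (nat \<Rightarrow> nat list) \<Rightarrow> nat \<Rightarrow> nat" where
  "maxrank n m P i = Max ((\<lambda>x. rank n P i x) ` {..<m})"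

end

theory Submission
  imports Defs "HOL-Library.Discrete_Functions"
begin

text \<open>Draw a scale \<open>2^t\<close> uniformly from \<open>t \<le> \<lfloor>log\<^sub>2 n\<rfloor>\<close> and return an outcome that
reaches rank \<open>2^t\<close> at the earliest possible level. If some outcome has rank
\<open>r \<ge> 2^t\<close> at level \<open>i\<close>, that earliest level is at most \<open>i\<close>, so by monotonicity of the rank
in the level the returned outcome has rank at least \<open>2^t\<close> at level \<open>i\<close>. The scale
\<open>t = \<lfloor>log\<^sub>2 (maxrank\<^sub>i)\<rfloor>\<close> is drawn with probability \<open>1/(\<lfloor>log\<^sub>2 n\<rfloor> + 1)\<close> and then
yields rank more than \<open>maxrank\<^sub>i / 2\<close>, which gives an \<open>O(log n)\<close>-approximation.\<close>

lemma rank_mono: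
  assumes "j \<le> i"
  shows "rank n P j x \<le> rank n P i x"
proof -
  have "set (take j (P k)) \<subseteq> set (take i (P k))" for k
    using assms by (rule set_take_subset_set_take)
  then show ?thesis
    unfolding rank_def by (intro card_mono) auto
qed

lemma rank_le_agents: "rank n P i x \<le> n"
proof -
  have "card {k. k < n \<and> x \<in> set (take i (P k))} \<le> card {..<n}"
    by (intro card_mono) auto
  then show ?thesis
    unfolding rank_def by simp
qed

lemma maxrank_attained:
  assumes "m \<ge> 1"
  obtains x where "x < m" "rank n P i x = maxrank n m P i"
proof -
  have "{..<m} \<noteq> {}"
    using assms by (auto simp: lessThan_empty_iff)
  then have "maxrank n m P i \<in> (\<lambda>x. rank n P i x) ` {..<m}"
    unfolding maxrank_def by (intro Max_in) auto
  then show thesis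
    using that by auto
qed

definition earliest_level :: "nat \<Rightarrow> nat \<Rightarrow> (nat \<Rightarrow> nat list) \<Rightarrow> nat \<Rightarrow> nat" where
  "earliest_level n m P k = (LEAST j. \<exists>x<m. k \<le> rank n P j x)"

definition earliest_reacher :: "nat \<Rightarrow> nat \<Rightarrow> (nat \<Rightarrow> nat list) \<Rightarrow> nat \<Rightarrow> nat" where
  "earliest_reacher n m P k =
     (if \<exists>j. \<exists>x<m. k \<le> rank n P j x
      then SOME x. x < m \<and> k \<le> rank n P (earliest_level n m P k) x
      else 0)"

lemma earliest_reacher_at_earliest_level:
  assumes "x < m" "k \<le> rank n P i x"
  shows "earliest_reacher n m P k < m \<and>
         k \<le> rank n P (earliest_level n m P k) (earliest_reacher n m P k)"
proof -
  have "\<exists>x<m. k \<le> rank n P i x"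
    using assms by blast
  then have "\<exists>x<m. k \<le> rank n P (earliest_level n m P k) x"
    unfolding earliest_level_def by (rule LeastI)
  then have "\<exists>x. x < m \<and> k \<le> rank n P (earliest_level n m P k) x"
    by blast
  from someI_ex[OF this] show ?thesis
    using assms unfolding earliest_reacher_def by auto
qed

lemma earliest_reacher_lt:
  assumes "m \<ge> 1"
  shows "earliest_reacher n m P k < m"
proof (cases "\<exists>j. \<exists>x<m. k \<le> rank n P j x")
  case True
  then show ?thesis
    using earliest_reacher_at_earliest_level by blast
next
  case False
  then show ?thesis
    using assms unfolding earliest_reacher_def by auto
qed

lemma earliest_reacher_rank_ge:
  assumes "x < m" "k \<le> rank n P i x"
  shows "k \<le> rank n P i (earliest_reacher n m P k)"
proof -
  have "earliest_level n m P k \<le> i"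
    unfolding earliest_level_def using assms by (intro Least_le) blast
  then show ?thesis
    using earliest_reacher_at_earliest_level[OF assms] rank_mono order_trans by blast
qed

definition scale_mechanism :: "nat \<Rightarrow> nat \<Rightarrow> (nat \<Rightarrow> nat list) \<Rightarrow> nat pmf" where
  "scale_mechanism n m P =
     map_pmf (\<lambda>t. earliest_reacher n m P (2 ^ t)) (pmf_of_set {..floor_log n})"

lemma set_scale_mechanism:
  assumes "m \<ge> 1"
  shows "set_pmf (scale_mechanism n m P) \<subseteq> {..<m}"
  using earliest_reacher_lt[OF assms] by (auto simp: scale_mechanism_def)

lemma expectation_rank_scale_mechanism_ge:
  assumes "x < m"
  shows "real (rank n P i x) / (2 * real (Suc (floor_log n)))
           \<le> measure_pmf.expectation (scale_mechanism n m P) (\<lambda>y. real (rank n P i y))"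
proof -
  define L where "L = {..floor_log n}"
  define f where "f t = real (rank n P i (earliest_reacher n m P (2 ^ t)))" for t
  define r where "r = rank n P i x"
  have card_L: "card L = Suc (floor_log n)"
    by (simp add: L_def)
  have expectation: "measure_pmf.expectation (scale_mechanism n m P) (\<lambda>y. real (rank n P i y))
                       = sum f L / card L"
    by (simp add: scale_mechanism_def L_def f_def integral_pmf_of_set)
  show ?thesis
  proof (cases "r = 0")
    case True
    then show ?thesis
      unfolding expectation r_def f_def by (simp add: sum_nonneg)
  next
    case False
    define t where "t = floor_log r"
    have "r \<le> n"
      unfolding r_def by (rule rank_le_agents)
    then have "t \<in> L"
      unfolding L_def t_def by (simp add: floor_log_le_iff)
    have "2 ^ t \<le> r"
      unfolding t_def using False floor_log_exp2_le by simp
    then have "2 ^ t \<le> rank n P i (earliest_reacher n m P (2 ^ t))"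
      using assms unfolding r_def by (rule earliest_reacher_rank_ge[rotated])
    moreover have "r < 2 * 2 ^ t"
      unfolding t_def by (rule floor_log_exp2_gt)
    ultimately have "real r / 2 \<le> f t"
      unfolding f_def by linarith
    also have "f t \<le> sum f L"
      using \<open>t \<in> L\<close> by (intro member_le_sum) (auto simp: f_def L_def)
    finally have "real r / 2 \<le> sum f L" .
    then have "real r / 2 / card L \<le> sum f L / card L"
      by (rule divide_right_mono) simp
    then show ?thesis
      unfolding expectation card_L r_def by simp
  qed
qed

lemma Suc_floor_log_le_ln:
  assumes "n \<ge> 2"
  shows "real (Suc (floor_log n)) \<le> 4 * ln (real n)"
proof -
  have "ln (1 - 1/2 :: real) \<le> - (1/2)"
    by (rule ln_one_minus_pos_upper_bound) auto
  then have ln2: "1/2 \<le> ln (2 :: real)"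
    by (simp add: ln_div)
  have "real (2 ^ floor_log n) \<le> real n"
    using floor_log_exp2_le[of n] assms by simp
  then have "real (floor_log n) * ln 2 \<le> ln (real n)"
    using assms by (simp add: ln_realpow[symmetric])
  moreover have "ln 2 \<le> ln (real n)"
    using assms by simp
  ultimately have "real (Suc (floor_log n)) * ln 2 \<le> 2 * ln (real n)"
    by (simp add: algebra_simps)
  moreover have "real (Suc (floor_log n)) * (1/2) \<le> real (Suc (floor_log n)) * ln 2"
    using ln2 by (intro mult_left_mono) auto
  ultimately have "real (Suc (floor_log n)) * (1/2) \<le> 2 * ln (real n)"
    by (rule order_trans[rotated])
  then show ?thesis
    by simp
qed

theorem theorem16:
  shows "\<exists>C::real. C > 0 \<and>
    (\<forall>n m::nat. n \<ge> 2 \<longrightarrow> m \<ge> 1 \<longrightarrow>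
      (\<exists>M :: (nat \<Rightarrow> nat list) \<Rightarrow> nat pmf.
         (\<forall>P. is_profile n m P \<longrightarrow> set_pmf (M P) \<subseteq> {..<m}) \<and>
         (\<forall>P. is_profile n m P \<longrightarrow> (\<forall>i\<in>{1..m}.
            measure_pmf.expectation (M P) (\<lambda>x. real (rank n P i x))
              \<ge> real (maxrank n m P i) / (C * ln (real n))))))"
proof (intro exI[of _ 8] conjI allI impI exI[of _ "scale_mechanism _ _"] ballI)
  fix n m :: nat and P i
  assume "n \<ge> 2" "m \<ge> 1"
  show "set_pmf (scale_mechanism n m P) \<subseteq> {..<m}"
    using \<open>m \<ge> 1\<close> by (rule set_scale_mechanism)
  obtain x where "x < m" and x_max: "rank n P i x = maxrank n m P i"
    using maxrank_attained[OF \<open>m \<ge> 1\<close>] .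
  have "real (maxrank n m P i) / (8 * ln (real n))
          \<le> real (maxrank n m P i) / (2 * real (Suc (floor_log n)))"
    using Suc_floor_log_le_ln[OF \<open>n \<ge> 2\<close>]
    by (intro divide_left_mono) auto
  also have "\<dots> \<le> measure_pmf.expectation (scale_mechanism n m P) (\<lambda>y. real (rank n P i y))"
    using expectation_rank_scale_mechanism_ge[OF \<open>x < m\<close>, where n = n and P = P and i = i]
    unfolding x_max .
  finally show "real (maxrank n m P i) / (8 * ln (real n))
                  \<le> measure_pmf.expectation (scale_mechanism n m P) (\<lambda>y. real (rank n P i y))" .
qed simp

end
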